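(* Let $\mathbb{K}=\mathbb{R}$ or $\mathbb{C}$ and let $\phi:A_1^\ast\to A_2^\ast$ be a morphism of cohomologically connected DGAs over $\mathbb{K}$ inducing isomorphisms on $0$-th and first cohomology and an injection on second cohomology. Let $V=\bigoplus_i V_i$ be a finite-dimensional graded $\mathbb{K}$-vector space, $W_k(V)=\bigoplus_{i\le k}V_i$, and for $i\ge 0$ let $U_i\subset\mathrm{End}(V)$ be the endomorphisms mapping each $V_j$ into $V_{j-i}$ (so $U_iU_j\subset U_{i+j}$). Let $\omega=\sum_{i\ge1}\omega_i$, $\omega_i\in A_2^1\otimes U_i$, satisfy $d\omega+\omega\wedge\omega=0$, i.e. $d\omega_k=-\sum_{i+j=k,\,i,j\ge1}\omega_i\wedge\omega_j$ for all $k$. Put $a_0=\mathrm{Id}_V$. Then there exist $\Omega_i\in A_1^1\otimes U_i$ and $a_i\in A_2^0\otimes U_i$ for all $i\ge1$ such that for every $k\ge1$ \[d\Omega_k=-\sum_{i+j=k,\,i,j\ge1}\Omega_i\wedge\Omega_j,\qquad da_k=-\sum_{i+j=k,\,i\ge1,\,j\ge0}\omega_ia_j+\sum_{i+j=k,\,i\ge0,\,j\ge1}a_i\phi(\Omega_j).\]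
   Context: Products $\omega_i\wedge\omega_j$, $\omega_ia_j$, etc. combine the product of the DGA with composition in $\mathrm{End}(V)$; $\phi$ is applied to the form part. A DGA is cohomologically connected if $H^0\cong\mathbb{K}$. *)

theory Defs
  imports Complex_Main "HOL-Library.Function_Algebras"
begin

text \<open>The algebra is a ring 'a with a 'k-scalar multiplication sc,
A p is the degree-p homogeneous part, and d the differential of degree +1.\<close>

definition is_dga :: "('k::field \<Rightarrow> 'a::ring_1 \<Rightarrow> 'a) \<Rightarrow> (nat \<Rightarrow> 'a set) \<Rightarrow> ('a \<Rightarrow> 'a) \<Rightarrow> bool" where
  "is_dga sc A d \<longleftrightarrow>
    \<comment> \<open>'k-algebra structure\<close>
    (\<forall>c x y. sc c (x + y) = sc c x + sc c y) \<and>
    (\<forall>c c' x. sc (c + c') x = sc c x + sc c' x) \<and>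
    (\<forall>c c' x. sc (c * c') x = sc c (sc c' x)) \<and>
    (\<forall>x. sc 1 x = x) \<and>
    (\<forall>c x y. sc c (x * y) = sc c x * y \<and> sc c (x * y) = x * sc c y) \<and>
    \<comment> \<open>grading: each A p is a subspace, products respect degrees, 1 has degree 0\<close>
    (\<forall>p. 0 \<in> A p \<and> (\<forall>x\<in>A p. \<forall>y\<in>A p. x + y \<in> A p) \<and> (\<forall>x\<in>A p. - x \<in> A p)
        \<and> (\<forall>c. \<forall>x\<in>A p. sc c x \<in> A p)) \<and>
    1 \<in> A 0 \<and>
    (\<forall>p q. \<forall>x\<in>A p. \<forall>y\<in>A q. x * y \<in> A (p + q)) \<and>
    \<comment> \<open>the algebra is the direct sum of the A p\<close>
    (\<forall>x. \<exists>N c. (\<forall>p. c p \<in> A p) \<and> x = (\<Sum>p\<le>N. c p)) \<and>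
    (\<forall>N c. (\<forall>p. c p \<in> A p) \<and> (\<Sum>p\<le>N. c p) = 0 \<longrightarrow> (\<forall>p\<le>N. c p = 0)) \<and>
    \<comment> \<open>differential\<close>
    (\<forall>x y. d (x + y) = d x + d y) \<and>
    (\<forall>c x. d (sc c x) = sc c (d x)) \<and>
    (\<forall>p. \<forall>x\<in>A p. d x \<in> A (Suc p)) \<and>
    (\<forall>x. d (d x) = 0) \<and>
    (\<forall>p. \<forall>x\<in>A p. \<forall>y. d (x * y) = d x * y + (-1) ^ p * x * d y)"

definition cocycles :: "(nat \<Rightarrow> 'a::ring_1 set) \<Rightarrow> ('a \<Rightarrow> 'a) \<Rightarrow> nat \<Rightarrow> 'a set" where
  "cocycles A d p = {x \<in> A p. d x = 0}"

definition coboundaries :: "(nat \<Rightarrow> 'a::ring_1 set) \<Rightarrow> ('a \<Rightarrow> 'a) \<Rightarrow> nat \<Rightarrow> 'a set" where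
  "coboundaries A d p = (if p = 0 then {0} else d ` A (p - 1))"

definition cohom_connected :: "('k::field \<Rightarrow> 'a::ring_1 \<Rightarrow> 'a) \<Rightarrow> (nat \<Rightarrow> 'a set) \<Rightarrow> ('a \<Rightarrow> 'a) \<Rightarrow> bool" where
  "cohom_connected sc A d \<longleftrightarrow> (1::'a) \<noteq> 0 \<and> cocycles A d 0 = range (\<lambda>c. sc c 1)"

definition dga_morphism ::
  "('k::field \<Rightarrow> 'a::ring_1 \<Rightarrow> 'a) \<Rightarrow> (nat \<Rightarrow> 'a set) \<Rightarrow> ('a \<Rightarrow> 'a) \<Rightarrow>
   ('k \<Rightarrow> 'b::ring_1 \<Rightarrow> 'b) \<Rightarrow> (nat \<Rightarrow> 'b set) \<Rightarrow> ('b \<Rightarrow> 'b) \<Rightarrow> ('a \<Rightarrow> 'b) \<Rightarrow> bool" where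
  "dga_morphism sc1 A1 d1 sc2 A2 d2 \<phi> \<longleftrightarrow>
    (\<forall>x y. \<phi> (x + y) = \<phi> x + \<phi> y) \<and>
    (\<forall>c x. \<phi> (sc1 c x) = sc2 c (\<phi> x)) \<and>
    (\<forall>x y. \<phi> (x * y) = \<phi> x * \<phi> y) \<and>
    \<phi> 1 = 1 \<and>
    (\<forall>p. \<phi> ` A1 p \<subseteq> A2 p) \<and>
    (\<forall>x. \<phi> (d1 x) = d2 (\<phi> x))"

definition induces_inj_H ::
  "(nat \<Rightarrow> 'a::ring_1 set) \<Rightarrow> ('a \<Rightarrow> 'a) \<Rightarrow> (nat \<Rightarrow> 'b::ring_1 set) \<Rightarrow> ('b \<Rightarrow> 'b) \<Rightarrow> ('a \<Rightarrow> 'b) \<Rightarrow> nat \<Rightarrow> bool" where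
  "induces_inj_H A1 d1 A2 d2 \<phi> p \<longleftrightarrow>
    (\<forall>x \<in> cocycles A1 d1 p. \<phi> x \<in> coboundaries A2 d2 p \<longrightarrow> x \<in> coboundaries A1 d1 p)"

definition induces_surj_H ::
  "(nat \<Rightarrow> 'a::ring_1 set) \<Rightarrow> ('a \<Rightarrow> 'a) \<Rightarrow> (nat \<Rightarrow> 'b::ring_1 set) \<Rightarrow> ('b \<Rightarrow> 'b) \<Rightarrow> ('a \<Rightarrow> 'b) \<Rightarrow> nat \<Rightarrow> bool" where
  "induces_surj_H A1 d1 A2 d2 \<phi> p \<longleftrightarrow>
    (\<forall>z \<in> cocycles A2 d2 p. \<exists>x \<in> cocycles A1 d1 p. z - \<phi> x \<in> coboundaries A2 d2 p)"

text \<open>Elements of A \<otimes> End(V): V has a finite homogeneous basis indexed by I, basis vector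
r having degree deg r; an element of A \<otimes> End(V) is a matrix with entries in A
(column s = image of basis vector s).  Only entries indexed by I are meaningful.\<close>

text \<open>M lies in A^p \<otimes> U_i: entries in A^p, and M maps V_j into V_{j-i}.\<close>
definition in_AU :: "'n set \<Rightarrow> ('n \<Rightarrow> int) \<Rightarrow> (nat \<Rightarrow> 'a::ring_1 set) \<Rightarrow> nat \<Rightarrow> nat \<Rightarrow> ('n \<Rightarrow> 'n \<Rightarrow> 'a) \<Rightarrow> bool" where
  "in_AU I deg A p i M \<longleftrightarrow>
    (\<forall>r\<in>I. \<forall>s\<in>I. M r s \<in> A p \<and> (deg r + int i \<noteq> deg s \<longrightarrow> M r s = 0))"

definition mmult :: "'n set \<Rightarrow> ('n \<Rightarrow> 'n \<Rightarrow> 'a::ring_1) \<Rightarrow> ('n \<Rightarrow> 'n \<Rightarrow> 'a) \<Rightarrow> ('n \<Rightarrow> 'n \<Rightarrow> 'a)" where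
  "mmult I M N = (\<lambda>r s. \<Sum>t\<in>I. M r t * N t s)"

definition mmap :: "('a \<Rightarrow> 'b) \<Rightarrow> ('n \<Rightarrow> 'n \<Rightarrow> 'a) \<Rightarrow> ('n \<Rightarrow> 'n \<Rightarrow> 'b)" where
  "mmap f M = (\<lambda>r s. f (M r s))"

definition mat_id :: "'n \<Rightarrow> 'n \<Rightarrow> 'a::ring_1" where
  "mat_id = (\<lambda>r s. if r = s then 1 else 0)"

definition meq :: "'n set \<Rightarrow> ('n \<Rightarrow> 'n \<Rightarrow> 'a) \<Rightarrow> ('n \<Rightarrow> 'n \<Rightarrow> 'a) \<Rightarrow> bool" where
  "meq I M N \<longleftrightarrow> (\<forall>r\<in>I. \<forall>s\<in>I. M r s = N r s)"

definition with_id0 :: "(nat \<Rightarrow> 'n \<Rightarrow> 'n \<Rightarrow> 'a::ring_1) \<Rightarrow> nat \<Rightarrow> 'n \<Rightarrow> 'n \<Rightarrow> 'a" where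
  "with_id0 a j = (if j = 0 then mat_id else a j)"

end

theory Submission
  imports Defs
begin

text \<open>The \<open>\<Omega>\<^sub>k\<close> and \<open>a\<^sub>k\<close> are constructed by induction on \<open>k\<close>. Once the equations hold below
  order \<open>k\<close>, the Maurer--Cartan obstruction \<open>R = - \<Sigma> \<Omega>\<^sub>i \<Omega>\<^sub>k\<^sub>-\<^sub>i\<close> is a closed 2-form, and for
  \<open>S = - \<Sigma> \<omega>\<^sub>i a\<^sub>k\<^sub>-\<^sub>i + \<Sigma>\<^sub>i\<^sub><\<^sub>k a\<^sub>i \<phi>(\<Omega>\<^sub>k\<^sub>-\<^sub>i)\<close> the lower equations give \<open>d S = - \<phi>(R)\<close>.
  So \<open>\<phi>(R)\<close> is exact, and injectivity of \<open>\<phi>\<close> on \<open>H\<^sup>2\<close> gives \<open>X\<^sub>0\<close> with \<open>d X\<^sub>0 = R\<close>. Then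
  \<open>S + \<phi>(X\<^sub>0)\<close> is closed, and surjectivity on \<open>H\<^sup>1\<close> writes it as \<open>\<phi>(X\<^sub>c) + d Y\<close> with \<open>X\<^sub>c\<close>
  closed; \<open>\<Omega>\<^sub>k = X\<^sub>0 - X\<^sub>c\<close> and \<open>a\<^sub>k = Y\<close> solve the equations at order \<open>k\<close>. All choices are made
  entry by entry, which preserves the degree shift.\<close>

lemma sum_fun_apply: "(\<Sum>i\<in>S. F i) x = (\<Sum>i\<in>S. F i x)"
  by (induct S rule: infinite_finite_induct) auto

subsection \<open>Matrices over a ring\<close>

lemma mmult_add_left: "mmult I (M + N) P = mmult I M P + mmult I N P"
  by (auto simp: mmult_def fun_eq_iff distrib_right sum.distrib)

lemma mmult_add_right: "mmult I P (M + N) = mmult I P M + mmult I P N"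
  by (auto simp: mmult_def fun_eq_iff distrib_left sum.distrib)

lemma mmult_minus_left: "mmult I (- M) P = - mmult I M P"
  by (simp add: mmult_def fun_eq_iff sum_negf)

lemma mmult_minus_right: "mmult I P (- M) = - mmult I P M"
  by (simp add: mmult_def fun_eq_iff sum_negf)

lemma mmult_diff_right: "mmult I P (M - N) = mmult I P M - mmult I P N"
  by (simp only: diff_conv_add_uminus mmult_add_right mmult_minus_right)

lemma mmult_zero_left [simp]: "mmult I 0 P = 0"
  by (simp add: mmult_def fun_eq_iff)

lemma mmult_zero_right [simp]: "mmult I P 0 = 0"
  by (simp add: mmult_def fun_eq_iff)

lemma mmult_sum_left: "mmult I (\<Sum>x\<in>S. F x) P = (\<Sum>x\<in>S. mmult I (F x) P)"
proof (intro ext)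
  fix r s
  have "mmult I (\<Sum>x\<in>S. F x) P r s = (\<Sum>t\<in>I. \<Sum>x\<in>S. F x r t * P t s)"
    by (simp add: mmult_def sum_fun_apply sum_distrib_right)
  also have "\<dots> = (\<Sum>x\<in>S. \<Sum>t\<in>I. F x r t * P t s)"
    by (rule sum.swap)
  finally show "mmult I (\<Sum>x\<in>S. F x) P r s = (\<Sum>x\<in>S. mmult I (F x) P) r s"
    by (simp add: mmult_def sum_fun_apply)
qed

lemma mmult_sum_right: "mmult I P (\<Sum>x\<in>S. F x) = (\<Sum>x\<in>S. mmult I P (F x))"
proof (intro ext)
  fix r s
  have "mmult I P (\<Sum>x\<in>S. F x) r s = (\<Sum>t\<in>I. \<Sum>x\<in>S. P r t * F x t s)"
    by (simp add: mmult_def sum_fun_apply sum_distrib_left)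
  also have "\<dots> = (\<Sum>x\<in>S. \<Sum>t\<in>I. P r t * F x t s)"
    by (rule sum.swap)
  finally show "mmult I P (\<Sum>x\<in>S. F x) r s = (\<Sum>x\<in>S. mmult I P (F x)) r s"
    by (simp add: mmult_def sum_fun_apply)
qed

lemma mmult_assoc: "mmult I (mmult I M N) P = mmult I M (mmult I N P)"
proof (intro ext)
  fix r s
  have "mmult I (mmult I M N) P r s = (\<Sum>u\<in>I. \<Sum>t\<in>I. M r t * N t u * P u s)"
    by (simp add: mmult_def sum_distrib_right)
  also have "\<dots> = (\<Sum>t\<in>I. \<Sum>u\<in>I. M r t * N t u * P u s)"
    by (rule sum.swap)
  also have "\<dots> = mmult I M (mmult I N P) r s"
    by (simp add: mmult_def sum_distrib_left mult.assoc)
  finally show "mmult I (mmult I M N) P r s = mmult I M (mmult I N P) r s" .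
qed

lemma mmult_cong:
  "(\<And>t. t \<in> I \<Longrightarrow> M r t = M' r t) \<Longrightarrow> (\<And>t. t \<in> I \<Longrightarrow> N t s = N' t s) \<Longrightarrow>
   mmult I M N r s = mmult I M' N' r s"
  unfolding mmult_def by (intro sum.cong refl) auto

lemma mmap_add: "additive f \<Longrightarrow> mmap f (M + N) = mmap f M + mmap f N"
  by (simp add: mmap_def fun_eq_iff additive.add)

lemma mmap_minus: "additive f \<Longrightarrow> mmap f (- M) = - mmap f M"
  by (simp add: mmap_def fun_eq_iff additive.minus)

lemma mmap_zero: "additive f \<Longrightarrow> mmap f 0 = 0"
  by (simp add: mmap_def fun_eq_iff additive.zero)

lemma mmap_diff: "additive f \<Longrightarrow> mmap f (M - N) = mmap f M - mmap f N"
  by (simp add: mmap_def fun_eq_iff additive.diff)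

lemma mmap_sum: "additive f \<Longrightarrow> mmap f (\<Sum>x\<in>S. F x) = (\<Sum>x\<in>S. mmap f (F x))"
  by (simp add: mmap_def fun_eq_iff additive.sum sum_fun_apply)

lemma mmap_mmult:
  "additive f \<Longrightarrow> (\<And>x y. f (x * y) = f x * f y) \<Longrightarrow>
   mmap f (mmult I M N) = mmult I (mmap f M) (mmap f N)"
  by (simp add: mmap_def mmult_def fun_eq_iff additive.sum)

definition Idr :: "'n set \<Rightarrow> 'n \<Rightarrow> 'n \<Rightarrow> 'a::ring_1" where
  "Idr I = (\<lambda>r s. if r \<in> I \<and> s \<in> I \<and> r = s then 1 else 0)"

lemma mmult_Idr_left:
  assumes "finite I" "\<And>r s. r \<notin> I \<Longrightarrow> M r s = 0"
  shows "mmult I (Idr I) M = M"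
proof (intro ext)
  fix r s
  show "mmult I (Idr I) M r s = M r s"
  proof (cases "r \<in> I")
    case True
    then have "mmult I (Idr I) M r s = (\<Sum>t\<in>I. if r = t then M t s else 0)"
      unfolding mmult_def Idr_def by (intro sum.cong) auto
    with True assms(1) show ?thesis by simp
  qed (simp add: mmult_def Idr_def assms(2))
qed

subsection \<open>Convolution of matrix sequences\<close>

definition mconv :: "'n set \<Rightarrow> nat \<Rightarrow> (nat \<Rightarrow> 'n \<Rightarrow> 'n \<Rightarrow> 'a::ring_1) \<Rightarrow>
    (nat \<Rightarrow> 'n \<Rightarrow> 'n \<Rightarrow> 'a) \<Rightarrow> 'n \<Rightarrow> 'n \<Rightarrow> 'a" where
  "mconv I k f g = (\<Sum>i=0..k. mmult I (f i) (g (k - i)))"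

lemma mconv_add_left: "mconv I k (f + g) h = mconv I k f h + mconv I k g h"
  by (simp add: mconv_def mmult_add_left sum.distrib)

lemma mconv_add_right: "mconv I k h (f + g) = mconv I k h f + mconv I k h g"
  by (simp add: mconv_def mmult_add_right sum.distrib)

lemma mconv_minus_left: "mconv I k (- f) h = - mconv I k f h"
  by (simp add: mconv_def mmult_minus_left sum_negf)

lemma mconv_minus_right: "mconv I k h (- f) = - mconv I k h f"
  by (simp add: mconv_def mmult_minus_right sum_negf)

lemma sum_triangle_reindex:
  fixes F :: "nat \<Rightarrow> nat \<Rightarrow> nat \<Rightarrow> 'a::comm_monoid_add"
  shows "(\<Sum>j=0..k. \<Sum>i=0..j. F i (j - i) (n - j)) = (\<Sum>j=0..k. \<Sum>i=0..k - j. F j i (n - j - i))"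
  by (induct k) (simp_all add: Suc_diff_le sum.distrib add.assoc)

lemma mconv_assoc: "mconv I k (\<lambda>n. mconv I n f g) h = mconv I k f (\<lambda>n. mconv I n g h)"
  using sum_triangle_reindex[where F = "\<lambda>a b c. mmult I (mmult I (f a) (g b)) (h c)" and n = k]
  by (simp add: mconv_def mmult_sum_left mmult_sum_right mmult_assoc)

lemma mconv_cong:
  "(\<And>i. i \<le> k \<Longrightarrow> f i = f' i) \<Longrightarrow> (\<And>i. i \<le> k \<Longrightarrow> g i = g' i) \<Longrightarrow>
   mconv I k f g = mconv I k f' g'"
  unfolding mconv_def by (intro sum.cong) auto

lemma mconv_cong_below_left:
  assumes "\<And>n. n < k \<Longrightarrow> f n = f' n" and "g 0 = 0"
  shows "mconv I k f g = mconv I k f' g"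
  unfolding mconv_def
proof (intro sum.cong refl)
  fix i assume "i \<in> {0..k}"
  then consider "i < k" | "k - i = 0" by fastforce
  then show "mmult I (f i) (g (k - i)) = mmult I (f' i) (g (k - i))"
    by cases (simp_all add: assms)
qed

lemma mconv_top_right:
  assumes "\<And>n. n < k \<Longrightarrow> g n = g' n"
  shows "mconv I k f g = mconv I k f g' + mmult I (f 0) (g k - g' k)"
proof -
  have split: "mconv I k f h = mmult I (f 0) (h k) + (\<Sum>i=Suc 0..k. mmult I (f i) (h (k - i)))" for h
    unfolding mconv_def by (simp add: sum.atLeast_Suc_atMost)
  have "(\<Sum>i=Suc 0..k. mmult I (f i) (g (k - i))) = (\<Sum>i=Suc 0..k. mmult I (f i) (g' (k - i)))"
    by (intro sum.cong) (simp_all add: assms)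
  then show ?thesis
    unfolding split[of g] split[of g'] mmult_diff_right by (simp add: algebra_simps)
qed

lemma mconv_cong_below_right:
  "(\<And>n. n < k \<Longrightarrow> g n = g' n) \<Longrightarrow> f 0 = 0 \<Longrightarrow> mconv I k f g = mconv I k f g'"
  by (simp add: mconv_top_right[of k g g'])

lemma mmap_mconv:
  "additive \<phi> \<Longrightarrow> (\<And>x y. \<phi> (x * y) = \<phi> x * \<phi> y) \<Longrightarrow>
   mmap \<phi> (mconv I k f g) = mconv I k (\<lambda>n. mmap \<phi> (f n)) (\<lambda>n. mmap \<phi> (g n))"
  unfolding mconv_def by (simp add: mmap_sum mmap_mmult)

lemma mconv_from_1: "f 0 = 0 \<Longrightarrow> mconv I k f g = (\<Sum>i\<in>{1..k}. mmult I (f i) (g (k - i)))"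
  unfolding mconv_def by (rule sum.mono_neutral_right) (auto simp: Suc_le_eq)

lemma mconv_upto_below: "g 0 = 0 \<Longrightarrow> mconv I k f g = (\<Sum>i\<in>{0..<k}. mmult I (f i) (g (k - i)))"
  unfolding mconv_def by (rule sum.mono_neutral_right) auto

lemma mconv_inner:
  "f 0 = 0 \<Longrightarrow> g 0 = 0 \<Longrightarrow> mconv I k f g = (\<Sum>i\<in>{1..<k}. mmult I (f i) (g (k - i)))"
  unfolding mconv_def by (rule sum.mono_neutral_right) (auto simp: Suc_le_eq)

subsection \<open>Differential graded algebras\<close>

lemma
  assumes "is_dga sc A d"
  shows dga_zero_mem: "0 \<in> A p"
    and dga_add_mem: "x \<in> A p \<Longrightarrow> y \<in> A p \<Longrightarrow> x + y \<in> A p"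
    and dga_minus_mem: "x \<in> A p \<Longrightarrow> - x \<in> A p"
    and dga_one_mem: "1 \<in> A 0"
    and dga_mult_mem: "x \<in> A p \<Longrightarrow> y \<in> A q \<Longrightarrow> x * y \<in> A (p + q)"
    and dga_additive: "additive d"
    and dga_d_mem: "x \<in> A p \<Longrightarrow> d x \<in> A (Suc p)"
    and dga_leibniz: "x \<in> A p \<Longrightarrow> d (x * y) = d x * y + (-1) ^ p * x * d y"
  using assms by (simp_all add: is_dga_def additive_def)

lemma dga_sum_mem: "is_dga sc A d \<Longrightarrow> (\<And>i. i \<in> S \<Longrightarrow> F i \<in> A p) \<Longrightarrow> (\<Sum>i\<in>S. F i) \<in> A p"
  by (induct S rule: infinite_finite_induct) (auto intro: dga_add_mem dga_zero_mem)

lemma dga_d_one: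
  assumes "is_dga sc A d" shows "d 1 = 0"
  using dga_leibniz[OF assms dga_one_mem[OF assms], of 1] by simp

lemma
  assumes "dga_morphism sc1 A1 d1 sc2 A2 d2 \<phi>"
  shows dga_morphism_additive: "additive \<phi>"
    and dga_morphism_mult: "\<phi> (x * y) = \<phi> x * \<phi> y"
    and dga_morphism_mem: "x \<in> A1 p \<Longrightarrow> \<phi> x \<in> A2 p"
    and dga_morphism_d: "\<phi> (d1 x) = d2 (\<phi> x)"
  using assms by (simp_all add: dga_morphism_def additive_def image_subset_iff)

lemma dga_morphism_mmap_d:
  "dga_morphism sc1 A1 d1 sc2 A2 d2 \<phi> \<Longrightarrow> mmap \<phi> (mmap d1 M) = mmap d2 (mmap \<phi> M)"
  by (simp add: mmap_def dga_morphism_d)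

lemma dga_mmult_leibniz_0:
  assumes "is_dga sc A d" "\<And>r s. M r s \<in> A 0"
  shows "mmap d (mmult I M N) = mmult I (mmap d M) N + mmult I M (mmap d N)"
  using assms dga_leibniz[OF assms(1) assms(2)]
  by (simp add: fun_eq_iff mmap_def mmult_def additive.sum[OF dga_additive] sum.distrib)

lemma dga_mmult_leibniz_1:
  assumes "is_dga sc A d" "\<And>r s. M r s \<in> A 1"
  shows "mmap d (mmult I M N) = mmult I (mmap d M) N - mmult I M (mmap d N)"
  using assms dga_leibniz[OF assms(1) assms(2)]
  by (simp add: fun_eq_iff mmap_def mmult_def additive.sum[OF dga_additive] sum_subtractf)

lemma dga_mconv_leibniz_0:
  assumes "is_dga sc A d" "\<And>n r s. f n r s \<in> A 0"
  shows "mmap d (mconv I k f g) = mconv I k (\<lambda>n. mmap d (f n)) g + mconv I k f (\<lambda>n. mmap d (g n))"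
  unfolding mconv_def
  by (simp add: mmap_sum[OF dga_additive[OF assms(1)]] dga_mmult_leibniz_0[OF assms] sum.distrib)

lemma dga_mconv_leibniz_1:
  assumes "is_dga sc A d" "\<And>n r s. f n r s \<in> A 1"
  shows "mmap d (mconv I k f g) = mconv I k (\<lambda>n. mmap d (f n)) g - mconv I k f (\<lambda>n. mmap d (g n))"
  unfolding mconv_def
  by (simp add: mmap_sum[OF dga_additive[OF assms(1)]] dga_mmult_leibniz_1[OF assms] sum_subtractf)

subsection \<open>Homogeneous matrices\<close>

text \<open>The matrices of \<open>A\<^sup>p \<otimes> U\<^sub>i\<close>, as in \<open>in_AU\<close> but with all entries outside
  \<open>I \<times> I\<close> equal to \<open>0\<close>, so that such matrices can be compared by equality instead of \<open>meq\<close>.\<close>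

definition hom_mat :: "'n set \<Rightarrow> ('n \<Rightarrow> int) \<Rightarrow> (nat \<Rightarrow> 'a::ring_1 set) \<Rightarrow> nat \<Rightarrow> nat \<Rightarrow>
    ('n \<Rightarrow> 'n \<Rightarrow> 'a) \<Rightarrow> bool" where
  "hom_mat I deg A p i M \<longleftrightarrow>
    (\<forall>r s. M r s \<in> A p) \<and> (\<forall>r s. M r s \<noteq> 0 \<longrightarrow> r \<in> I \<and> s \<in> I \<and> deg r + int i = deg s)"

lemma hom_mat_mem: "hom_mat I deg A p i M \<Longrightarrow> M r s \<in> A p"
  unfolding hom_mat_def by blast

lemma hom_mat_outside:
  "hom_mat I deg A p i M \<Longrightarrow> \<not> (r \<in> I \<and> s \<in> I \<and> deg r + int i = deg s) \<Longrightarrow> M r s = 0"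
  unfolding hom_mat_def by blast

lemma hom_mat_in_AU: "hom_mat I deg A p i M \<Longrightarrow> in_AU I deg A p i M"
  unfolding hom_mat_def in_AU_def by blast

lemma hom_mat_zero: "is_dga sc A d \<Longrightarrow> hom_mat I deg A p i 0"
  by (simp add: hom_mat_def dga_zero_mem)

lemma hom_mat_add:
  "is_dga sc A d \<Longrightarrow> hom_mat I deg A p i M \<Longrightarrow> hom_mat I deg A p i N \<Longrightarrow> hom_mat I deg A p i (M + N)"
  unfolding hom_mat_def by (auto intro: dga_add_mem; metis add.right_neutral add_0)

lemma hom_mat_minus: "is_dga sc A d \<Longrightarrow> hom_mat I deg A p i M \<Longrightarrow> hom_mat I deg A p i (- M)"
  unfolding hom_mat_def by (auto intro: dga_minus_mem)

lemma hom_mat_diff: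
  "is_dga sc A d \<Longrightarrow> hom_mat I deg A p i M \<Longrightarrow> hom_mat I deg A p i N \<Longrightarrow> hom_mat I deg A p i (M - N)"
  by (simp only: diff_conv_add_uminus hom_mat_add hom_mat_minus)

lemma hom_mat_sum:
  "is_dga sc A d \<Longrightarrow> (\<And>x. x \<in> S \<Longrightarrow> hom_mat I deg A p i (F x)) \<Longrightarrow> hom_mat I deg A p i (\<Sum>x\<in>S. F x)"
  by (induct S rule: infinite_finite_induct) (auto intro: hom_mat_add hom_mat_zero)

lemma hom_mat_mmult:
  assumes "is_dga sc A d" "hom_mat I deg A p i M" "hom_mat I deg A q j N"
  shows "hom_mat I deg A (p + q) (i + j) (mmult I M N)"
proof -
  have "mmult I M N r s \<in> A (p + q)" for r s
    unfolding mmult_def using hom_mat_mem[OF assms(2)] hom_mat_mem[OF assms(3)]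
    by (intro dga_sum_mem[OF assms(1)] dga_mult_mem[OF assms(1)])
  moreover have "r \<in> I \<and> s \<in> I \<and> deg r + int (i + j) = deg s" if "mmult I M N r s \<noteq> 0" for r s
  proof -
    from that obtain t where "M r t \<noteq> 0" "N t s \<noteq> 0"
      unfolding mmult_def by (metis (no_types, lifting) mult_not_zero sum.neutral)
    then show ?thesis
      using assms(2,3) unfolding hom_mat_def by fastforce
  qed
  ultimately show ?thesis
    unfolding hom_mat_def by blast
qed

lemma hom_mat_mconv:
  assumes "is_dga sc A d" "\<And>n. hom_mat I deg A p n (f n)" "\<And>n. hom_mat I deg A q n (g n)"
  shows "hom_mat I deg A (p + q) k (mconv I k f g)"
  unfolding mconv_def
proof (rule hom_mat_sum[OF assms(1)])
  fix i assume "i \<in> {0..k}"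
  then show "hom_mat I deg A (p + q) k (mmult I (f i) (g (k - i)))"
    using hom_mat_mmult[OF assms(1) assms(2)[of i] assms(3)[of "k - i"]] by simp
qed

lemma hom_mat_mmap_d:
  "is_dga sc A d \<Longrightarrow> hom_mat I deg A p i M \<Longrightarrow> hom_mat I deg A (Suc p) i (mmap d M)"
  unfolding hom_mat_def mmap_def by (metis dga_d_mem additive.zero[OF dga_additive])

lemma hom_mat_mmap_morphism:
  "dga_morphism sc1 A1 d1 sc2 A2 d2 \<phi> \<Longrightarrow> hom_mat I deg A1 p i M \<Longrightarrow> hom_mat I deg A2 p i (mmap \<phi> M)"
  unfolding hom_mat_def mmap_def by (metis dga_morphism_mem additive.zero[OF dga_morphism_additive])

lemma hom_mat_Idr: "is_dga sc A d \<Longrightarrow> hom_mat I deg A 0 0 (Idr I)"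
  unfolding hom_mat_def Idr_def by (auto simp: dga_one_mem dga_zero_mem)

lemma mmult_Idr_hom_mat: "finite I \<Longrightarrow> hom_mat I deg A p i M \<Longrightarrow> mmult I (Idr I) M = M"
  by (rule mmult_Idr_left) (auto dest: hom_mat_outside)

subsection \<open>Lifting through the map on cohomology\<close>

lemma hom_mat_subsupport:
  assumes "hom_mat I deg B q i N" "\<And>r s. M r s \<in> A p" "\<And>r s. M r s \<noteq> 0 \<Longrightarrow> N r s \<noteq> 0"
  shows "hom_mat I deg A p i M"
  using assms unfolding hom_mat_def by blast

lemma exact_lift_of_induces_inj_H:
  assumes dga: "is_dga sc1 A1 d1"
    and inj: "induces_inj_H A1 d1 A2 d2 \<phi> (Suc q)"
    and R: "hom_mat I deg A1 (Suc q) i R" "mmap d1 R = 0"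
    and T: "hom_mat I deg A2 q i T" "mmap \<phi> R = mmap d2 T"
  shows "\<exists>X. hom_mat I deg A1 q i X \<and> mmap d1 X = R"
proof -
  have "\<exists>x. x \<in> A1 q \<and> d1 x = R r s \<and> (R r s = 0 \<longrightarrow> x = 0)" for r s
  proof (cases "R r s = 0")
    case True
    then show ?thesis
      using dga_zero_mem[OF dga] additive.zero[OF dga_additive[OF dga]] by auto
  next
    case False
    have "R r s \<in> cocycles A1 d1 (Suc q)"
      using hom_mat_mem[OF R(1)] fun_cong[OF fun_cong[OF R(2)]] by (simp add: cocycles_def mmap_def)
    moreover have "\<phi> (R r s) \<in> coboundaries A2 d2 (Suc q)"
      using hom_mat_mem[OF T(1)] fun_cong[OF fun_cong[OF T(2)]] by (simp add: coboundaries_def mmap_def)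
    ultimately have "R r s \<in> coboundaries A1 d1 (Suc q)"
      using inj unfolding induces_inj_H_def by blast
    with False show ?thesis
      by (auto simp: coboundaries_def)
  qed
  then obtain X where X: "\<And>r s. X r s \<in> A1 q \<and> d1 (X r s) = R r s \<and> (R r s = 0 \<longrightarrow> X r s = 0)"
    by metis
  have "hom_mat I deg A1 q i X"
    using X by (intro hom_mat_subsupport[OF R(1)]) auto
  moreover have "mmap d1 X = R"
    using X by (simp add: mmap_def fun_eq_iff)
  ultimately show ?thesis by blast
qed

lemma cocycle_lift_of_induces_surj_H:
  assumes dga1: "is_dga sc1 A1 d1" and dga2: "is_dga sc2 A2 d2"
    and mor: "dga_morphism sc1 A1 d1 sc2 A2 d2 \<phi>"
    and surj: "induces_surj_H A1 d1 A2 d2 \<phi> (Suc q)"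
    and Z: "hom_mat I deg A2 (Suc q) i Z" "mmap d2 Z = 0"
  shows "\<exists>X Y. hom_mat I deg A1 (Suc q) i X \<and> mmap d1 X = 0 \<and> hom_mat I deg A2 q i Y \<and>
    Z = mmap \<phi> X + mmap d2 Y"
proof -
  have zero: "0 \<in> A1 (Suc q)" "0 \<in> A2 q" "d1 0 = 0" "d2 0 = 0" "\<phi> 0 = 0"
    using dga_zero_mem[OF dga1] dga_zero_mem[OF dga2] additive.zero[OF dga_additive[OF dga1]]
      additive.zero[OF dga_additive[OF dga2]] additive.zero[OF dga_morphism_additive[OF mor]]
    by auto
  have "\<exists>x. x \<in> cocycles A1 d1 (Suc q) \<and> Z r s - \<phi> x \<in> d2 ` A2 q \<and> (Z r s = 0 \<longrightarrow> x = 0)" for r s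
  proof (cases "Z r s = 0")
    case True
    then show ?thesis
      using zero by (auto simp: cocycles_def)
  next
    case False
    have "Z r s \<in> cocycles A2 d2 (Suc q)"
      using hom_mat_mem[OF Z(1)] fun_cong[OF fun_cong[OF Z(2)]] by (simp add: cocycles_def mmap_def)
    with surj False show ?thesis
      unfolding induces_surj_H_def coboundaries_def by (simp; blast)
  qed
  then obtain X where X: "\<And>r s. X r s \<in> cocycles A1 d1 (Suc q) \<and> Z r s - \<phi> (X r s) \<in> d2 ` A2 q \<and>
      (Z r s = 0 \<longrightarrow> X r s = 0)"
    by metis
  have "\<exists>y. y \<in> A2 q \<and> Z r s = \<phi> (X r s) + d2 y \<and> (Z r s = 0 \<longrightarrow> y = 0)" for r s
    using X[of r s] zero by (cases "Z r s = 0") (auto simp: algebra_simps)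
  then have "\<exists>Y. \<forall>r s. Y r s \<in> A2 q \<and> Z r s = \<phi> (X r s) + d2 (Y r s) \<and> (Z r s = 0 \<longrightarrow> Y r s = 0)"
    by (intro choice allI) blast
  then obtain Y where Y: "\<And>r s. Y r s \<in> A2 q \<and> Z r s = \<phi> (X r s) + d2 (Y r s) \<and> (Z r s = 0 \<longrightarrow> Y r s = 0)"
    by blast
  have "X r s \<in> A1 (Suc q)" "X r s \<noteq> 0 \<Longrightarrow> Z r s \<noteq> 0" for r s
    using X[of r s] unfolding cocycles_def by blast+
  moreover have "Y r s \<in> A2 q" "Y r s \<noteq> 0 \<Longrightarrow> Z r s \<noteq> 0" for r s
    using Y[of r s] by blast+
  ultimately have "hom_mat I deg A1 (Suc q) i X" "hom_mat I deg A2 q i Y"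
    by (intro hom_mat_subsupport[OF Z(1)]; blast)+
  moreover have "mmap d1 X = 0" "Z = mmap \<phi> X + mmap d2 Y"
    using X Y by (simp_all add: mmap_def fun_eq_iff cocycles_def)
  ultimately show ?thesis by blast
qed

subsection \<open>The obstructions are closed\<close>

lemma mc_obstruction_closed:
  assumes dga: "is_dga sc A d"
    and Om: "Om 0 = 0" "\<And>n. hom_mat I deg A 1 n (Om n)"
      "\<And>n. n < k \<Longrightarrow> mmap d (Om n) = - mconv I n Om Om"
  shows "mmap d (mconv I k Om Om) = 0"
proof -
  let ?OO = "\<lambda>n. mconv I n Om Om"
  have "mconv I k (\<lambda>n. mmap d (Om n)) Om = - mconv I k ?OO Om"
    by (subst mconv_cong_below_left[where f' = "- ?OO"]) (simp_all add: Om mconv_minus_left)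
  moreover have "mconv I k Om (\<lambda>n. mmap d (Om n)) = - mconv I k Om ?OO"
    by (subst mconv_cong_below_right[where g' = "- ?OO"]) (simp_all add: Om mconv_minus_right)
  moreover have "mconv I k ?OO Om = mconv I k Om ?OO"
    by (rule mconv_assoc)
  moreover have "Om n r s \<in> A 1" for n r s
    by (rule hom_mat_mem[OF Om(2)])
  ultimately show ?thesis
    by (simp add: dga_mconv_leibniz_1[OF dga])
qed

lemma gauge_defect_differential:
  assumes dga: "is_dga sc A d" and fin: "finite I"
    and w: "w 0 = 0" "\<And>n. hom_mat I deg A 1 n (w n)" "\<And>n. mmap d (w n) = - mconv I n w w"
    and \<Phi>: "\<Phi> 0 = 0" "\<And>n. hom_mat I deg A 1 n (\<Phi> n)" "\<And>n. n < k \<Longrightarrow> mmap d (\<Phi> n) = - mconv I n \<Phi> \<Phi>"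
    and a: "a 0 = Idr I" "\<And>n. hom_mat I deg A 0 n (a n)"
      "\<And>n. n < k \<Longrightarrow> mmap d (a n) = - mconv I n w a + mconv I n a \<Phi>"
  shows "mmap d (- mconv I k w a + mconv I k a \<Phi>) = mconv I k \<Phi> \<Phi> + mmap d (\<Phi> k)"
proof -
  define ww where "ww = (\<lambda>n. mconv I n w w)"
  define wa where "wa = (\<lambda>n. mconv I n w a)"
  define a\<Phi> where "a\<Phi> = (\<lambda>n. mconv I n a \<Phi>)"
  define \<Phi>\<Phi> where "\<Phi>\<Phi> = (\<lambda>n. mconv I n \<Phi> \<Phi>)"
  have dw: "(\<lambda>n. mmap d (w n)) = - ww"
    by (simp add: fun_eq_iff w ww_def)
  have w_da: "mconv I k w (\<lambda>n. mmap d (a n)) = mconv I k w (- wa + a\<Phi>)"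
    by (rule mconv_cong_below_right) (simp_all add: a w wa_def a\<Phi>_def)
  have da_\<Phi>: "mconv I k (\<lambda>n. mmap d (a n)) \<Phi> = mconv I k (- wa + a\<Phi>) \<Phi>"
    by (rule mconv_cong_below_left) (simp_all add: a \<Phi> wa_def a\<Phi>_def)
  have "hom_mat I deg A 2 k (mmap d (\<Phi> k) + \<Phi>\<Phi> k)"
    using hom_mat_mmap_d[OF dga \<Phi>(2)] hom_mat_mconv[OF dga \<Phi>(2) \<Phi>(2)]
    by (simp add: \<Phi>\<Phi>_def hom_mat_add[OF dga] numeral_2_eq_2)
  then have a_d\<Phi>: "mconv I k a (\<lambda>n. mmap d (\<Phi> n)) = - mconv I k a \<Phi>\<Phi> + (mmap d (\<Phi> k) + \<Phi>\<Phi> k)"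
    using mconv_top_right[of k "\<lambda>n. mmap d (\<Phi> n)" "- \<Phi>\<Phi>" I a]
    by (simp add: \<Phi> \<Phi>\<Phi>_def a(1) mconv_minus_right mmult_Idr_hom_mat[OF fin])
  have "mmap d (- mconv I k w a + mconv I k a \<Phi>) =
      - (mconv I k (\<lambda>n. mmap d (w n)) a - mconv I k w (\<lambda>n. mmap d (a n)))
      + (mconv I k (\<lambda>n. mmap d (a n)) \<Phi> + mconv I k a (\<lambda>n. mmap d (\<Phi> n)))"
    using hom_mat_mem[OF w(2)] hom_mat_mem[OF a(2)]
    by (simp only: mmap_add[OF dga_additive[OF dga]] mmap_minus[OF dga_additive[OF dga]]
        dga_mconv_leibniz_0[OF dga] dga_mconv_leibniz_1[OF dga])
  also have "\<dots> = - (- mconv I k ww a - (- mconv I k w wa + mconv I k w a\<Phi>))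
      + ((- mconv I k wa \<Phi> + mconv I k a\<Phi> \<Phi>) + (- mconv I k a \<Phi>\<Phi> + (mmap d (\<Phi> k) + \<Phi>\<Phi> k)))"
    by (simp only: dw w_da da_\<Phi> a_d\<Phi> mconv_add_left mconv_add_right mconv_minus_left mconv_minus_right)
  also have "\<dots> = \<Phi>\<Phi> k + mmap d (\<Phi> k)"
    unfolding ww_def wa_def a\<Phi>_def \<Phi>\<Phi>_def mconv_assoc by (simp add: algebra_simps)
  finally show ?thesis
    by (simp add: \<Phi>\<Phi>_def)
qed

subsection \<open>The inductive construction\<close>

locale mc_lifting =
  fixes sc1 :: "'k::field \<Rightarrow> 'a::ring_1 \<Rightarrow> 'a" and A1 :: "nat \<Rightarrow> 'a set" and d1 :: "'a \<Rightarrow> 'a"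
    and sc2 :: "'k \<Rightarrow> 'b::ring_1 \<Rightarrow> 'b" and A2 :: "nat \<Rightarrow> 'b set" and d2 :: "'b \<Rightarrow> 'b"
    and \<phi> :: "'a \<Rightarrow> 'b" and I :: "'n set" and deg :: "'n \<Rightarrow> int"
    and w :: "nat \<Rightarrow> 'n \<Rightarrow> 'n \<Rightarrow> 'b"
  assumes dga1: "is_dga sc1 A1 d1" and dga2: "is_dga sc2 A2 d2"
    and mor: "dga_morphism sc1 A1 d1 sc2 A2 d2 \<phi>"
    and inj_H2: "induces_inj_H A1 d1 A2 d2 \<phi> 2" and surj_H1: "induces_surj_H A1 d1 A2 d2 \<phi> 1"
    and fin: "finite I"
    and w_zero: "w 0 = 0" and w_hom: "\<And>n. hom_mat I deg A2 1 n (w n)"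
    and w_mc: "\<And>n. mmap d2 (w n) = - mconv I n w w"
begin

text \<open>Since \<open>\<Omega> 0 = 0\<close>, \<open>w 0 = 0\<close> and \<open>a 0 = Idr I\<close>, the full convolutions below are exactly
  the sums of the theorem, with \<open>a\<^sub>0 = Id\<close>.\<close>

definition solves_at :: "nat \<Rightarrow> (nat \<Rightarrow> 'n \<Rightarrow> 'n \<Rightarrow> 'a) \<Rightarrow> (nat \<Rightarrow> 'n \<Rightarrow> 'n \<Rightarrow> 'b) \<Rightarrow> bool" where
  "solves_at k \<Omega> a \<longleftrightarrow>
    mmap d1 (\<Omega> k) = - mconv I k \<Omega> \<Omega> \<and>
    mmap d2 (a k) = - mconv I k w a + mconv I k a (\<lambda>n. mmap \<phi> (\<Omega> n))"

definition partial_solution :: "nat \<Rightarrow> (nat \<Rightarrow> 'n \<Rightarrow> 'n \<Rightarrow> 'a) \<Rightarrow> (nat \<Rightarrow> 'n \<Rightarrow> 'n \<Rightarrow> 'b) \<Rightarrow> bool" where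
  "partial_solution n \<Omega> a \<longleftrightarrow>
    \<Omega> 0 = 0 \<and> a 0 = Idr I \<and> (\<forall>i. hom_mat I deg A1 1 i (\<Omega> i)) \<and> (\<forall>i. hom_mat I deg A2 0 i (a i)) \<and>
    (\<forall>i>n. \<Omega> i = 0) \<and> (\<forall>k\<le>n. solves_at k \<Omega> a)"

lemma additive_d1: "additive d1" and additive_d2: "additive d2" and additive_\<phi>: "additive \<phi>"
  using dga_additive[OF dga1] dga_additive[OF dga2] dga_morphism_additive[OF mor] .

lemma solves_at_cong:
  assumes "\<And>i. i \<le> k \<Longrightarrow> \<Omega> i = \<Omega>' i" "\<And>i. i \<le> k \<Longrightarrow> a i = a' i"
  shows "solves_at k \<Omega> a = solves_at k \<Omega>' a'"
proof -
  have "mconv I k \<Omega> \<Omega> = mconv I k \<Omega>' \<Omega>'" "mconv I k w a = mconv I k w a'"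
    "mconv I k a (\<lambda>n. mmap \<phi> (\<Omega> n)) = mconv I k a' (\<lambda>n. mmap \<phi> (\<Omega>' n))"
    by (intro mconv_cong; simp add: assms)+
  then show ?thesis
    by (simp add: solves_at_def assms)
qed

lemma partial_solution_0: "partial_solution 0 (\<lambda>_. 0) ((\<lambda>_. 0)(0 := Idr I))"
proof -
  have "mmap d2 (Idr I) = 0"
    by (simp add: fun_eq_iff mmap_def Idr_def dga_d_one[OF dga2] additive.zero[OF additive_d2])
  then show ?thesis
    unfolding partial_solution_def solves_at_def
    by (simp add: mconv_def w_zero mmap_zero additive_d1 additive_\<phi> hom_mat_zero[OF dga1]
        hom_mat_zero[OF dga2] hom_mat_Idr[OF dga2])
qed

lemma partial_solution_defects:
  assumes "partial_solution n \<Omega> a"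
  defines "\<Phi> \<equiv> \<lambda>i. mmap \<phi> (\<Omega> i)"
  shows "hom_mat I deg A1 2 (Suc n) (mconv I (Suc n) \<Omega> \<Omega>)"
    and "mmap d1 (mconv I (Suc n) \<Omega> \<Omega>) = 0"
    and "hom_mat I deg A2 1 (Suc n) (- mconv I (Suc n) w a + mconv I (Suc n) a \<Phi>)"
    and "mmap d2 (- mconv I (Suc n) w a + mconv I (Suc n) a \<Phi>) = mconv I (Suc n) \<Phi> \<Phi>"
proof -
  let ?k = "Suc n"
  have \<Omega>: "\<Omega> 0 = 0" "\<And>i. hom_mat I deg A1 1 i (\<Omega> i)" "\<Omega> ?k = 0"
    "\<And>i. i < ?k \<Longrightarrow> mmap d1 (\<Omega> i) = - mconv I i \<Omega> \<Omega>"
    and a: "a 0 = Idr I" "\<And>i. hom_mat I deg A2 0 i (a i)"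
    "\<And>i. i < ?k \<Longrightarrow> mmap d2 (a i) = - mconv I i w a + mconv I i a \<Phi>"
    using assms unfolding partial_solution_def solves_at_def by auto
  have \<Phi>_zero: "\<Phi> 0 = 0" "\<Phi> ?k = 0"
    by (simp_all add: \<Phi>_def \<Omega> mmap_zero additive_\<phi>)
  have \<Phi>_hom: "hom_mat I deg A2 1 i (\<Phi> i)" for i
    unfolding \<Phi>_def by (rule hom_mat_mmap_morphism[OF mor \<Omega>(2)])
  have \<Phi>_mc: "mmap d2 (\<Phi> i) = - mconv I i \<Phi> \<Phi>" if "i < ?k" for i
    using \<Omega>(4)[OF that]
    by (simp add: \<Phi>_def dga_morphism_mmap_d[OF mor, symmetric] mmap_minus additive_\<phi>
        mmap_mconv dga_morphism_mult[OF mor])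
  show "hom_mat I deg A1 2 ?k (mconv I ?k \<Omega> \<Omega>)"
    using hom_mat_mconv[OF dga1 \<Omega>(2) \<Omega>(2)] by (simp add: numeral_2_eq_2)
  show "mmap d1 (mconv I ?k \<Omega> \<Omega>) = 0"
    by (rule mc_obstruction_closed[OF dga1 \<Omega>(1,2,4)])
  show "hom_mat I deg A2 1 ?k (- mconv I ?k w a + mconv I ?k a \<Phi>)"
    using hom_mat_mconv[OF dga2 w_hom a(2)] hom_mat_mconv[OF dga2 a(2) \<Phi>_hom]
    by (intro hom_mat_add[OF dga2] hom_mat_minus[OF dga2]) simp_all
  show "mmap d2 (- mconv I ?k w a + mconv I ?k a \<Phi>) = mconv I ?k \<Phi> \<Phi>"
    using gauge_defect_differential[OF dga2 fin w_zero w_hom w_mc \<Phi>_zero(1) \<Phi>_hom \<Phi>_mc a]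
    by (simp add: \<Phi>_zero(2) mmap_zero additive_d2)
qed

lemma next_term_exists:
  assumes "partial_solution n \<Omega> a"
  defines "\<Phi> \<equiv> \<lambda>i. mmap \<phi> (\<Omega> i)"
  shows "\<exists>X Y. hom_mat I deg A1 1 (Suc n) X \<and> hom_mat I deg A2 0 (Suc n) Y \<and>
    mmap d1 X = - mconv I (Suc n) \<Omega> \<Omega> \<and>
    mmap d2 Y = - mconv I (Suc n) w a + mconv I (Suc n) a \<Phi> + mmap \<phi> X"
proof -
  let ?k = "Suc n"
  define R where "R = - mconv I ?k \<Omega> \<Omega>"
  define S where "S = - mconv I ?k w a + mconv I ?k a \<Phi>"
  note defects = partial_solution_defects[OF assms(1), folded \<Phi>_def]
  have R_hom: "hom_mat I deg A1 2 ?k R" and dR: "mmap d1 R = 0"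
    using defects(1,2) by (simp_all add: R_def hom_mat_minus[OF dga1] mmap_minus additive_d1)
  have S_hom: "hom_mat I deg A2 1 ?k S" and dS: "mmap d2 S = mconv I ?k \<Phi> \<Phi>"
    using defects(3,4) by (simp_all add: S_def)
  have \<phi>R: "mmap \<phi> R = mmap d2 (- S)"
    by (simp add: R_def \<Phi>_def dS mmap_minus additive_\<phi> additive_d2 mmap_mconv
        dga_morphism_mult[OF mor])
  have "\<exists>X0. hom_mat I deg A1 1 ?k X0 \<and> mmap d1 X0 = R"
    by (rule exact_lift_of_induces_inj_H[OF dga1 _ _ dR _ \<phi>R])
      (use inj_H2 R_hom hom_mat_minus[OF dga2 S_hom] in \<open>simp_all add: numeral_2_eq_2\<close>)
  then obtain X0 where X0: "hom_mat I deg A1 1 ?k X0" "mmap d1 X0 = R"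
    by blast
  define Z where "Z = S + mmap \<phi> X0"
  have Z_hom: "hom_mat I deg A2 1 ?k Z"
    unfolding Z_def by (intro hom_mat_add[OF dga2] S_hom hom_mat_mmap_morphism[OF mor X0(1)])
  have dZ: "mmap d2 Z = 0"
    by (simp add: Z_def mmap_add additive_d2 dS dga_morphism_mmap_d[OF mor, symmetric] X0(2)
        \<phi>R mmap_minus)
  have "\<exists>Xc Y. hom_mat I deg A1 1 ?k Xc \<and> mmap d1 Xc = 0 \<and> hom_mat I deg A2 0 ?k Y \<and>
      Z = mmap \<phi> Xc + mmap d2 Y"
    using cocycle_lift_of_induces_surj_H[where q = 0, OF dga1 dga2 mor _ _ dZ] surj_H1 Z_hom
    by simp
  then obtain Xc Y where Xc: "hom_mat I deg A1 1 ?k Xc" "mmap d1 Xc = 0"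
    and Y: "hom_mat I deg A2 0 ?k Y" "Z = mmap \<phi> Xc + mmap d2 Y"
    by blast
  show ?thesis
  proof (intro exI conjI)
    show "hom_mat I deg A1 1 ?k (X0 - Xc)"
      by (rule hom_mat_diff[OF dga1 X0(1) Xc(1)])
    show "mmap d1 (X0 - Xc) = - mconv I ?k \<Omega> \<Omega>"
      by (simp add: mmap_diff additive_d1 X0(2) Xc(2) R_def)
    show "mmap d2 Y = - mconv I ?k w a + mconv I ?k a \<Phi> + mmap \<phi> (X0 - Xc)"
      using Y(2) by (simp add: Z_def S_def mmap_diff additive_\<phi> algebra_simps)
  qed (fact Y(1))
qed

lemma partial_solution_extend:
  assumes "partial_solution n \<Omega> a"
  shows "\<exists>X Y. partial_solution (Suc n) (\<Omega>(Suc n := X)) (a(Suc n := Y))"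
proof -
  let ?k = "Suc n"
  define \<Phi> where "\<Phi> = (\<lambda>i. mmap \<phi> (\<Omega> i))"
  obtain X Y where XY: "hom_mat I deg A1 1 ?k X" "hom_mat I deg A2 0 ?k Y"
      "mmap d1 X = - mconv I ?k \<Omega> \<Omega>" "mmap d2 Y = - mconv I ?k w a + mconv I ?k a \<Phi> + mmap \<phi> X"
    using next_term_exists[OF assms] unfolding \<Phi>_def by blast
  have sol: "\<Omega> 0 = 0" "a 0 = Idr I" "\<forall>i. hom_mat I deg A1 1 i (\<Omega> i)" "\<forall>i. hom_mat I deg A2 0 i (a i)"
      "\<forall>i>n. \<Omega> i = 0" "\<forall>k\<le>n. solves_at k \<Omega> a"
    using assms unfolding partial_solution_def by auto
  let ?\<Omega> = "\<Omega>(?k := X)" and ?a = "a(?k := Y)"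
  have "mconv I ?k ?\<Omega> ?\<Omega> = mconv I ?k \<Omega> \<Omega>"
    by (simp add: mconv_cong_below_left[of ?k ?\<Omega> \<Omega>] mconv_cong_below_right[of ?k ?\<Omega> \<Omega>] sol(1))
  moreover have "mconv I ?k w ?a = mconv I ?k w a"
    by (rule mconv_cong_below_right) (simp_all add: w_zero)
  moreover have "mconv I ?k ?a (\<lambda>i. mmap \<phi> (?\<Omega> i)) = mconv I ?k a \<Phi> + mmap \<phi> X"
  proof -
    have "mconv I ?k ?a (\<lambda>i. mmap \<phi> (?\<Omega> i)) = mconv I ?k a (\<lambda>i. mmap \<phi> (?\<Omega> i))"
      by (rule mconv_cong_below_left) (simp_all add: sol(1) mmap_zero additive_\<phi>)
    also have "\<dots> = mconv I ?k a \<Phi> + mmult I (Idr I) (mmap \<phi> X)"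
      using sol(5) by (subst mconv_top_right[where g' = \<Phi>]) (simp_all add: \<Phi>_def sol(2) mmap_zero additive_\<phi>)
    also have "mmult I (Idr I) (mmap \<phi> X) = mmap \<phi> X"
      by (rule mmult_Idr_hom_mat[OF fin hom_mat_mmap_morphism[OF mor XY(1)]])
    finally show ?thesis .
  qed
  ultimately have "solves_at ?k ?\<Omega> ?a"
    by (simp add: solves_at_def XY)
  moreover have "solves_at k ?\<Omega> ?a" if "k \<le> n" for k
    using sol(6) that solves_at_cong[of k ?\<Omega> \<Omega> ?a a] by simp
  ultimately have "partial_solution ?k ?\<Omega> ?a"
    unfolding partial_solution_def using sol XY(1,2) by (auto simp: le_Suc_eq)
  then show ?thesis by blast
qed

lemma solution_exists:
  "\<exists>\<Omega> a. \<Omega> 0 = 0 \<and> a 0 = Idr I \<and> (\<forall>i. hom_mat I deg A1 1 i (\<Omega> i)) \<and>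
    (\<forall>i. hom_mat I deg A2 0 i (a i)) \<and> (\<forall>k. solves_at k \<Omega> a)"
proof -
  obtain f where f: "\<And>n. partial_solution n (fst (f n)) (snd (f n))"
    "\<And>n. \<exists>X Y. f (Suc n) = ((fst (f n))(Suc n := X), (snd (f n))(Suc n := Y))"
    using dependent_nat_choice[where P = "\<lambda>n p. partial_solution n (fst p) (snd p)"
        and Q = "\<lambda>n p p'. \<exists>X Y. p' = ((fst p)(Suc n := X), (snd p)(Suc n := Y))"]
      partial_solution_0 partial_solution_extend by fastforce
  define \<Omega> where "\<Omega> i = fst (f i) i" for i
  define a where "a i = snd (f i) i" for i
  have stable: "fst (f n) i = \<Omega> i \<and> snd (f n) i = a i" if "i \<le> n" for i n
    using that
  proof (induction n)
    case (Suc n)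
    then show ?case
      using f(2)[of n] by (cases "i = Suc n") (auto simp: \<Omega>_def a_def)
  qed (simp add: \<Omega>_def a_def)
  have "solves_at k \<Omega> a" for k
    using f(1)[of k] solves_at_cong[of k "fst (f k)" \<Omega> "snd (f k)" a] stable
    unfolding partial_solution_def by auto
  moreover have "\<Omega> 0 = 0" "a 0 = Idr I" "hom_mat I deg A1 1 i (\<Omega> i)" "hom_mat I deg A2 0 i (a i)" for i
    using f(1) unfolding partial_solution_def \<Omega>_def a_def by auto
  ultimately show ?thesis by blast
qed

end

subsection \<open>Restriction to the index set\<close>

text \<open>Normalising \<open>\<omega>\<close> in this way turns its hypotheses, stated with \<open>meq\<close>, into the
  matrix equations assumed in \<open>mc_lifting\<close>.\<close>

definition restrict_seq :: "'n set \<Rightarrow> (nat \<Rightarrow> 'n \<Rightarrow> 'n \<Rightarrow> 'a::zero) \<Rightarrow> nat \<Rightarrow> 'n \<Rightarrow> 'n \<Rightarrow> 'a" where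
  "restrict_seq I \<omega> n r s = (if n \<noteq> 0 \<and> r \<in> I \<and> s \<in> I then \<omega> n r s else 0)"

lemma restrict_seq_0: "restrict_seq I \<omega> 0 = 0"
  by (simp add: restrict_seq_def fun_eq_iff)

lemma hom_mat_restrict_seq:
  assumes "is_dga sc A d" "\<forall>i\<ge>1. in_AU I deg A p i (\<omega> i)"
  shows "hom_mat I deg A p n (restrict_seq I \<omega> n)"
proof -
  have "restrict_seq I \<omega> n r s \<in> A p" for r s
    using assms by (simp add: restrict_seq_def in_AU_def dga_zero_mem)
  moreover have "r \<in> I \<and> s \<in> I \<and> deg r + int n = deg s" if "restrict_seq I \<omega> n r s \<noteq> 0" for r s
    using that assms(2) unfolding restrict_seq_def in_AU_def by (metis less_one not_le)
  ultimately show ?thesis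
    unfolding hom_mat_def by blast
qed

lemma mc_restrict_seq:
  assumes dga: "is_dga sc A d"
    and mc: "\<forall>k\<ge>1. meq I (mmap d (\<omega> k)) (- (\<Sum>i\<in>{1..<k}. mmult I (\<omega> i) (\<omega> (k - i))))"
  shows "mmap d (restrict_seq I \<omega> n) = - mconv I n (restrict_seq I \<omega>) (restrict_seq I \<omega>)"
proof (intro ext)
  fix r s
  let ?w = "restrict_seq I \<omega>"
  show "mmap d (?w n) r s = (- mconv I n ?w ?w) r s"
  proof (cases "n \<noteq> 0 \<and> r \<in> I \<and> s \<in> I")
    case True
    have "mmap d (?w n) r s = - (\<Sum>i\<in>{1..<n}. mmult I (\<omega> i) (\<omega> (n - i)) r s)"
      using True mc by (simp add: meq_def mmap_def restrict_seq_def sum_fun_apply)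
    also have "(\<Sum>i\<in>{1..<n}. mmult I (\<omega> i) (\<omega> (n - i)) r s) = (\<Sum>i\<in>{1..<n}. mmult I (?w i) (?w (n - i)) r s)"
      using True by (intro sum.cong refl mmult_cong) (auto simp: restrict_seq_def)
    also have "\<dots> = mconv I n ?w ?w r s"
      by (simp add: mconv_inner[where f = ?w and g = ?w, OF restrict_seq_0 restrict_seq_0] sum_fun_apply)
    finally show ?thesis by simp
  next
    case False
    then have "mconv I n ?w ?w r s = 0"
      by (auto simp: mconv_def mmult_def sum_fun_apply restrict_seq_def)
    with False show ?thesis
      by (auto simp: mmap_def restrict_seq_def additive.zero[OF dga_additive[OF dga]])
  qed
qed

lemma gauge_equation_meq:
  assumes "a 0 = Idr I" "g 0 = 0"
    and "mmap d (a k) = - mconv I k (restrict_seq I \<omega>) a + mconv I k a g"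
  shows "meq I (mmap d (a k))
    (- (\<Sum>i\<in>{1..k}. mmult I (\<omega> i) (with_id0 a (k - i))) + (\<Sum>i\<in>{0..<k}. mmult I (with_id0 a i) (g (k - i))))"
  unfolding meq_def
proof (intro ballI)
  fix r s assume r: "r \<in> I" and s: "s \<in> I"
  have a: "with_id0 a j t u = a j t u" if "t \<in> I" "u \<in> I" for j t u
    using that assms(1) by (simp add: with_id0_def Idr_def mat_id_def)
  have "mconv I k (restrict_seq I \<omega>) a r s = (\<Sum>i\<in>{1..k}. mmult I (\<omega> i) (with_id0 a (k - i)) r s)"
    unfolding mconv_from_1[where f = "restrict_seq I \<omega>", OF restrict_seq_0] sum_fun_apply
    using r s by (intro sum.cong refl mmult_cong) (simp_all add: a restrict_seq_def)
  moreover have "mconv I k a g r s = (\<Sum>i\<in>{0..<k}. mmult I (with_id0 a i) (g (k - i)) r s)"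
    unfolding mconv_upto_below[where g = g, OF assms(2)] sum_fun_apply
    using r by (intro sum.cong refl mmult_cong) (simp_all add: a)
  ultimately show "mmap d (a k) r s = (- (\<Sum>i\<in>{1..k}. mmult I (\<omega> i) (with_id0 a (k - i)))
      + (\<Sum>i\<in>{0..<k}. mmult I (with_id0 a i) (g (k - i)))) r s"
    by (simp add: assms(3) sum_fun_apply)
qed

theorem lemma10p3:
  fixes sc1 :: "'k::{real_normed_field,banach} \<Rightarrow> 'a::ring_1 \<Rightarrow> 'a"
    and A1 :: "nat \<Rightarrow> 'a set" and d1 :: "'a \<Rightarrow> 'a"
    and sc2 :: "'k \<Rightarrow> 'b::ring_1 \<Rightarrow> 'b"
    and A2 :: "nat \<Rightarrow> 'b set" and d2 :: "'b \<Rightarrow> 'b"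
    and \<phi> :: "'a \<Rightarrow> 'b"
    and I :: "'n set" and deg :: "'n \<Rightarrow> int"
    and \<omega> :: "nat \<Rightarrow> 'n \<Rightarrow> 'n \<Rightarrow> 'b"
  assumes "is_dga sc1 A1 d1" and "is_dga sc2 A2 d2"
    and "cohom_connected sc1 A1 d1" and "cohom_connected sc2 A2 d2"
    and "dga_morphism sc1 A1 d1 sc2 A2 d2 \<phi>"
    and "induces_inj_H A1 d1 A2 d2 \<phi> 0" and "induces_surj_H A1 d1 A2 d2 \<phi> 0"
    and "induces_inj_H A1 d1 A2 d2 \<phi> 1" and "induces_surj_H A1 d1 A2 d2 \<phi> 1"
    and "induces_inj_H A1 d1 A2 d2 \<phi> 2"
    and "finite I"
    and "\<forall>i\<ge>1. in_AU I deg A2 1 i (\<omega> i)"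
    and "\<forall>k\<ge>1. meq I (mmap d2 (\<omega> k)) (- (\<Sum>i\<in>{1..<k}. mmult I (\<omega> i) (\<omega> (k - i))))"
  shows "\<exists>\<Omega> a.
    (\<forall>i\<ge>1. in_AU I deg A1 1 i (\<Omega> i)) \<and>
    (\<forall>i\<ge>1. in_AU I deg A2 0 i (a i)) \<and>
    (\<forall>k\<ge>1.
       meq I (mmap d1 (\<Omega> k)) (- (\<Sum>i\<in>{1..<k}. mmult I (\<Omega> i) (\<Omega> (k - i)))) \<and>
       meq I (mmap d2 (a k))
         (- (\<Sum>i\<in>{1..k}. mmult I (\<omega> i) (with_id0 a (k - i)))
          + (\<Sum>i\<in>{0..<k}. mmult I (with_id0 a i) (mmap \<phi> (\<Omega> (k - i))))))"
proof -
  interpret mc_lifting sc1 A1 d1 sc2 A2 d2 \<phi> I deg "restrict_seq I \<omega>"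
    by unfold_locales
      (use assms in \<open>simp_all add: restrict_seq_0 hom_mat_restrict_seq mc_restrict_seq\<close>)
  obtain \<Omega> a where \<Omega>: "\<Omega> 0 = 0" "\<And>i. hom_mat I deg A1 1 i (\<Omega> i)"
    and a: "a 0 = Idr I" "\<And>i. hom_mat I deg A2 0 i (a i)"
    and sol: "\<And>k. solves_at k \<Omega> a"
    using solution_exists by blast
  have "meq I (mmap d1 (\<Omega> k)) (- (\<Sum>i\<in>{1..<k}. mmult I (\<Omega> i) (\<Omega> (k - i))))" for k
    using sol[of k] by (simp add: solves_at_def meq_def mconv_inner[where f = \<Omega> and g = \<Omega>, OF \<Omega>(1) \<Omega>(1)])
  moreover have "meq I (mmap d2 (a k))
      (- (\<Sum>i\<in>{1..k}. mmult I (\<omega> i) (with_id0 a (k - i)))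
       + (\<Sum>i\<in>{0..<k}. mmult I (with_id0 a i) (mmap \<phi> (\<Omega> (k - i)))))" for k
    by (rule gauge_equation_meq[where a = a, OF a(1)])
      (use sol[of k] \<Omega>(1) in \<open>simp_all add: solves_at_def mmap_def fun_eq_iff additive.zero[OF additive_\<phi>]\<close>)
  ultimately show ?thesis
    using hom_mat_in_AU[OF \<Omega>(2)] hom_mat_in_AU[OF a(2)] by blast
qed

end
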